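(* There is a computable Friedberg enumeration $(\mathcal{G}_n)_{n\in\omega}$ of $FUG$ such that whenever $\mathcal{G}\cong\mathcal{G}_m$ and $\mathcal{G}'\cong\mathcal{G}_n$, where $\mathcal{G}'$ is a proper extension of $\mathcal{G}$ (i.e. $\mathcal{G}\subsetneq\mathcal{G}'$ as substructures), we have $m<n$.
   Context: $FUG$ is the class of finite undirected graphs (language $\{E\}$, $E$ irreflexive and symmetric) with universe a subset of $\omega$, closed under isomorphism. $D(\mathcal{A})$ is the atomic diagram of $\mathcal{A}$ (atomic sentences and their negations true in $\mathcal{A}$, elements used as constants, identified with Gödel numbers). A computable enumeration of a class $K$ is a c.e. set $\mathcal{E}$ of pairs $(n,\varphi)$, $n\in\omega$, $\varphi$ an atomic sentence or negation of one, such that (a) for each $n$, $\{\varphi:(n,\varphi)\in\mathcal{E}\}=D(\mathcal{A}_n)$ for some $\mathcal{A}_n\in K$, and (b) every $\mathcal{A}\in K$ is isomorphic to some $\mathcal{A}_n$; it is written $(\mathcal{A}_n)_{n\in\omega}$. It is Friedberg if each isomorphism type in $K$ is represented by exactly one $n$. *)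

theory Defs
  imports Main "HOL-Library.Nat_Bijection"
begin

datatype recf =
    Z
  | S
  | Proj nat
  | Cn recf "recf list"
  | Pr recf recf
  | Mn recf

inductive eval :: "recf \<Rightarrow> nat list \<Rightarrow> nat \<Rightarrow> bool" where
  eval_Z: "eval Z xs 0"
| eval_S: "eval S (x # xs) (Suc x)"
| eval_Proj: "i < length xs \<Longrightarrow> eval (Proj i) xs (xs ! i)"
| eval_Cn: "length ys = length gs \<Longrightarrow> (\<forall>j < length gs. eval (gs ! j) xs (ys ! j))
            \<Longrightarrow> eval f ys y \<Longrightarrow> eval (Cn f gs) xs y"
| eval_Pr0: "eval f xs y \<Longrightarrow> eval (Pr f g) (0 # xs) y"
| eval_PrSuc: "eval (Pr f g) (n # xs) r \<Longrightarrow> eval g (n # r # xs) y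
            \<Longrightarrow> eval (Pr f g) (Suc n # xs) y"
| eval_Mn: "eval f (y # xs) 0 \<Longrightarrow> (\<forall>z < y. \<exists>v. v > 0 \<and> eval f (z # xs) v)
            \<Longrightarrow> eval (Mn f) xs y"

definition ce :: "nat set \<Rightarrow> bool" where
  "ce A \<longleftrightarrow> (\<exists>f. \<forall>x. x \<in> A \<longleftrightarrow> (\<exists>y. eval f [x] y))"

datatype atom = AEq nat nat | AE nat nat
datatype literal = Pos atom | Neg atom

fun atom_code :: "atom \<Rightarrow> nat" where
  "atom_code (AEq a b) = 2 * prod_encode (a, b)"
| "atom_code (AE a b) = 2 * prod_encode (a, b) + 1"

fun lit_code :: "literal \<Rightarrow> nat" where
  "lit_code (Pos a) = 2 * atom_code a"
| "lit_code (Neg a) = 2 * atom_code a + 1"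

definition pair_code :: "nat \<times> literal \<Rightarrow> nat" where
  "pair_code p = prod_encode (fst p, lit_code (snd p))"

type_synonym graph = "nat set \<times> (nat \<times> nat) set"

definition fug :: "graph \<Rightarrow> bool" where
  "fug G \<longleftrightarrow> finite (fst G) \<and> fst G \<noteq> {} \<and> snd G \<subseteq> fst G \<times> fst G
            \<and> irrefl (snd G) \<and> sym (snd G)"

definition diag :: "graph \<Rightarrow> literal set" where
  "diag G = {Pos (AEq a b) | a b. a \<in> fst G \<and> b \<in> fst G \<and> a = b}
          \<union> {Neg (AEq a b) | a b. a \<in> fst G \<and> b \<in> fst G \<and> a \<noteq> b}
          \<union> {Pos (AE a b) | a b. a \<in> fst G \<and> b \<in> fst G \<and> (a, b) \<in> snd G}
          \<union> {Neg (AE a b) | a b. a \<in> fst G \<and> b \<in> fst G \<and> (a, b) \<notin> snd G}"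

definition graph_iso :: "graph \<Rightarrow> graph \<Rightarrow> bool" where
  "graph_iso G H \<longleftrightarrow> (\<exists>f. bij_betw f (fst G) (fst H) \<and>
      (\<forall>a\<in>fst G. \<forall>b\<in>fst G. (a, b) \<in> snd G \<longleftrightarrow> (f a, f b) \<in> snd H))"

definition substructure :: "graph \<Rightarrow> graph \<Rightarrow> bool" where
  "substructure G H \<longleftrightarrow> fst G \<subseteq> fst H \<and> snd G = snd H \<inter> (fst G \<times> fst G)"

definition proper_substructure :: "graph \<Rightarrow> graph \<Rightarrow> bool" where
  "proper_substructure G H \<longleftrightarrow> substructure G H \<and> G \<noteq> H"

definition computable_enumeration_FUG :: "(nat \<times> literal) set \<Rightarrow> (nat \<Rightarrow> graph) \<Rightarrow> bool" where
  "computable_enumeration_FUG Enum Gs \<longleftrightarrow>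
     ce (pair_code ` Enum)
   \<and> (\<forall>n. fug (Gs n) \<and> {\<phi>. (n, \<phi>) \<in> Enum} = diag (Gs n))
   \<and> (\<forall>G. fug G \<longrightarrow> (\<exists>n. graph_iso G (Gs n)))"

definition friedberg_FUG :: "(nat \<times> literal) set \<Rightarrow> (nat \<Rightarrow> graph) \<Rightarrow> bool" where
  "friedberg_FUG Enum Gs \<longleftrightarrow> computable_enumeration_FUG Enum Gs
     \<and> (\<forall>G. fug G \<longrightarrow> (\<exists>!n. graph_iso G (Gs n)))"

end

theory Submission
  imports Defs
begin

(*
  Every finite graph with k vertices is isomorphic to a graph on
  {0..<k}, and such a graph is coded by a natural number: the codes of size-k
  graphs form the block [code_base k, code_base (k + 1)), where the block has
  length 2^(k*k), and inside it the offset is the bit mask of the adjacency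
  matrix.  Isomorphism of two codes is decidable (search through all bit-coded
  permutations), so the set of "canonical" codes -- those of positive size not
  isomorphic to any smaller code -- is decidable.  Enumerating the canonical
  codes in increasing order, canon 0 < canon 1 < ..., gives exactly one graph
  per isomorphism type, and since codes are ordered by graph size first, a
  graph with strictly more vertices always receives a larger index.  A proper
  extension of a finite graph has strictly more vertices, which yields the
  ordering property.
*)

section \<open>Total recursive functions\<close>

text \<open>Evaluation of a recf is deterministic.  This is needed to read off the
  value of a subcomputation when showing that decidable sets are c.e.\<close>

lemma eval_deterministic: "eval f xs y \<Longrightarrow> eval f xs y' \<Longrightarrow> y = y'"
proof (induction arbitrary: y' rule: eval.induct)
  case (eval_Z xs) from eval_Z.prems show ?case by (cases rule: eval.cases) auto
next
  case (eval_S x xs) from eval_S.prems show ?case by (cases rule: eval.cases) auto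
next
  case (eval_Proj i xs) from eval_Proj.prems show ?case by (cases rule: eval.cases) auto
next
  case (eval_Cn ys gs xs f y)
  from eval_Cn.prems obtain ys' where l: "length ys' = length gs"
    and a: "\<forall>j<length gs. eval (gs ! j) xs (ys' ! j)" and b: "eval f ys' y'"
    by (cases rule: eval.cases) auto
  have "ys = ys'"
    by (rule nth_equalityI) (use eval_Cn.hyps(1) eval_Cn.IH(1) l a in auto)
  then show ?case using eval_Cn.IH(2) b by simp
next
  case (eval_Pr0 f xs y g)
  from eval_Pr0.prems show ?case using eval_Pr0.IH by (cases rule: eval.cases) auto
next
  case (eval_PrSuc f g n xs r y)
  from eval_PrSuc.prems obtain r' where "eval (Pr f g) (n # xs) r'" "eval g (n # r' # xs) y'"
    by (cases rule: eval.cases) auto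
  then show ?case using eval_PrSuc.IH by metis
next
  case (eval_Mn f y xs)
  from eval_Mn.prems obtain y2 where "y' = y2" "eval f (y2 # xs) 0"
    and h2: "\<forall>z<y2. \<exists>v. v > 0 \<and> eval f (z # xs) v"
    by (cases rule: eval.cases) auto
  show ?case
  proof (rule linorder_cases[of y y2])
    assume "y < y2" then obtain v where v: "v > 0" "eval f (y # xs) v" using h2 by blast
    have "0 = v" using eval_Mn.IH(1) v(2) by blast
    then show ?thesis using v(1) by simp
  next
    assume "y2 < y" then obtain v where "v > 0" "eval f (y2 # xs) v"
      "\<forall>w. eval f (y2 # xs) w \<longrightarrow> v = w"
      using eval_Mn.IH(2) by blast
    then show ?thesis using \<open>eval f (y2 # xs) 0\<close> by blast
  qed (use \<open>y' = y2\<close> in simp)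
qed

text \<open>Working with environments instead of lists makes the closure
  lemmas below easy to state.\<close>

definition computable :: "nat \<Rightarrow> ((nat \<Rightarrow> nat) \<Rightarrow> nat) \<Rightarrow> bool" where
  "computable n f \<longleftrightarrow> (\<exists>r. \<forall>e. eval r (map e [0..<n]) (f e))"

fun const_recf :: "nat \<Rightarrow> recf" where
  "const_recf 0 = Z"
| "const_recf (Suc c) = Cn S [const_recf c]"

lemma eval_const_recf: "eval (const_recf c) xs c"
proof (induction c)
  case 0 then show ?case by (simp add: eval_Z)
next
  case (Suc c)
  have "eval S [c] (Suc c)" by (rule eval_S)
  then show ?case using Suc by (auto intro!: eval_Cn[where ys="[c]"])
qed

lemma computable_const: "computable n (\<lambda>e. c)"
  unfolding computable_def using eval_const_recf by blast

lemma computable_proj: "i < n \<Longrightarrow> computable n (\<lambda>e. e i)"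
  unfolding computable_def
  by (rule exI[of _ "Proj i"]) (metis eval_Proj length_map length_upt minus_nat.diff_0 nth_map_upt add_0)

lemma computable_Suc: "computable 1 (\<lambda>e. Suc (e 0))"
  unfolding computable_def by (rule exI[of _ S]) (simp add: eval_S)

lemma computable_compose:
  assumes F: "computable k F" and G: "\<And>j. j < k \<Longrightarrow> computable n (G j)"
  shows "computable n (\<lambda>e. F (\<lambda>j. G j e))"
proof -
  obtain rF where rF: "\<forall>e. eval rF (map e [0..<k]) (F e)" using F computable_def by blast
  have "\<forall>j<k. \<exists>r. \<forall>e. eval r (map e [0..<n]) (G j e)" using G computable_def by blast
  then obtain R where R: "\<forall>j<k. \<forall>e. eval (R j) (map e [0..<n]) (G j e)" by metis
  show ?thesis unfolding computable_def
  proof (intro exI allI)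
    fix e
    show "eval (Cn rF (map R [0..<k])) (map e [0..<n]) (F (\<lambda>j. G j e))"
      by (rule eval_Cn[where ys="map (\<lambda>j. G j e) [0..<k]"]) (use R rF in auto)
  qed
qed

fun prim_rec :: "((nat \<Rightarrow> nat) \<Rightarrow> nat) \<Rightarrow> (nat \<Rightarrow> nat \<Rightarrow> (nat \<Rightarrow> nat) \<Rightarrow> nat) \<Rightarrow> nat \<Rightarrow> (nat \<Rightarrow> nat) \<Rightarrow> nat" where
  "prim_rec G H 0 e = G e"
| "prim_rec G H (Suc y) e = H y (prim_rec G H y e) e"

lemma map_upt_shift: "map e [0..<Suc n] = e 0 # map (\<lambda>i. e (Suc i)) [0..<n]"
  by (induction n) auto

lemma computable_prim_rec:
  assumes G: "computable n G" and H: "computable (Suc (Suc n)) (\<lambda>e. H (e 0) (e 1) (\<lambda>i. e (Suc (Suc i))))"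
  shows "computable (Suc n) (\<lambda>e. prim_rec G H (e 0) (\<lambda>i. e (Suc i)))"
proof -
  obtain g where g: "\<forall>e. eval g (map e [0..<n]) (G e)" using G computable_def by blast
  from H[unfolded computable_def] obtain h where h: "\<forall>e. eval h (map e [0..<Suc (Suc n)]) (H (e 0) (e 1) (\<lambda>i. e (Suc (Suc i))))"
    by blast
  have main: "eval (Pr g h) (y # map e [0..<n]) (prim_rec G H y e)" for y e
  proof (induction y)
    case 0 then show ?case using g by (simp add: eval_Pr0)
  next
    case (Suc y)
    let ?e = "\<lambda>i. if i = 0 then y else if i = 1 then prim_rec G H y e else e (i - 2)"
    have "eval h (map ?e [0..<Suc (Suc n)]) (H (?e 0) (?e 1) (\<lambda>i. ?e (Suc (Suc i))))" using h by blast
    moreover have "map ?e [0..<Suc (Suc n)] = y # prim_rec G H y e # map e [0..<n]"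
      unfolding map_upt_shift by simp
    ultimately have "eval h (y # prim_rec G H y e # map e [0..<n]) (H y (prim_rec G H y e) e)" by simp
    then show ?case using Suc by (simp add: eval_PrSuc)
  qed
  show ?thesis unfolding computable_def
  proof (intro exI allI)
    fix e
    show "eval (Pr g h) (map e [0..<Suc n]) (prim_rec G H (e 0) (\<lambda>i. e (Suc i)))"
      unfolding map_upt_shift by (rule main)
  qed
qed

lemma computable_cong: "computable n f \<Longrightarrow> (\<And>e. f e = g e) \<Longrightarrow> computable n g"
proof -
  assume "computable n f" "\<And>e. f e = g e"
  then have "f = g" by auto
  then show ?thesis using \<open>computable n f\<close> by simp
qed

lemma computable_app1: "computable 1 (\<lambda>e. F (e 0)) \<Longrightarrow> computable n g \<Longrightarrow> computable n (\<lambda>e. F (g e))"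
  using computable_compose[of 1 "\<lambda>e. F (e 0)" n "\<lambda>j. g"] by simp

lemma computable_app2: "computable 2 (\<lambda>e. F (e 0) (e 1)) \<Longrightarrow> computable n g \<Longrightarrow> computable n h \<Longrightarrow> computable n (\<lambda>e. F (g e) (h e))"
  using computable_compose[of 2 "\<lambda>e. F (e 0) (e 1)" n "\<lambda>j. if j = 0 then g else h"]
  by (simp add: less_2_cases_iff)

lemma computable_app3: "computable 3 (\<lambda>e. F (e 0) (e 1) (e 2)) \<Longrightarrow> computable n f \<Longrightarrow> computable n g \<Longrightarrow> computable n h
   \<Longrightarrow> computable n (\<lambda>e. F (f e) (g e) (h e))"
  using computable_compose[of 3 "\<lambda>e. F (e 0) (e 1) (e 2)" n "\<lambda>j. if j = 0 then f else if j = 1 then g else h"]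
  by (auto simp: numeral_3_eq_3 less_Suc_eq)

lemma computable_SucI: "computable n f \<Longrightarrow> computable n (\<lambda>e. Suc (f e))"
  by (rule computable_app1[OF computable_Suc])

lemma prim_rec_add: "prim_rec (\<lambda>e. e 0) (\<lambda>y r e. Suc r) y e = y + e 0"
  by (induction y) auto

lemma computable_add2: "computable 2 (\<lambda>e. e 0 + e 1)"
proof -
  have "computable 3 (\<lambda>e. Suc (e 1))" by (rule computable_app1[OF computable_Suc computable_proj]) simp
  then have "computable (Suc 1) (\<lambda>e. prim_rec (\<lambda>e. e 0) (\<lambda>y r e. Suc r) (e 0) (\<lambda>i. e (Suc i)))"
    by (intro computable_prim_rec computable_proj) (simp_all add: numeral_3_eq_3 numeral_2_eq_2 One_nat_def)
  then show ?thesis by (simp add: prim_rec_add numeral_2_eq_2)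
qed

lemma computable_add: "computable n f \<Longrightarrow> computable n g \<Longrightarrow> computable n (\<lambda>e. f e + g e)"
  by (rule computable_app2[OF computable_add2])

lemma prim_rec_mult: "prim_rec (\<lambda>e. 0) (\<lambda>y r e. r + e 0) y e = y * e 0"
  by (induction y) auto

lemma computable_mult2: "computable 2 (\<lambda>e. e 0 * e 1)"
proof -
  have "computable 3 (\<lambda>e. e 1 + e 2)" by (intro computable_add computable_proj) auto
  then have "computable (Suc 1) (\<lambda>e. prim_rec (\<lambda>e. 0) (\<lambda>y r e. r + e 0) (e 0) (\<lambda>i. e (Suc i)))"
    by (intro computable_prim_rec computable_const) (simp_all add: numeral_3_eq_3 numeral_2_eq_2 One_nat_def)
  then show ?thesis by (simp add: prim_rec_mult numeral_2_eq_2)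
qed

lemma computable_mult: "computable n f \<Longrightarrow> computable n g \<Longrightarrow> computable n (\<lambda>e. f e * g e)"
  by (rule computable_app2[OF computable_mult2])

lemma prim_rec_pred: "prim_rec (\<lambda>e. 0) (\<lambda>y r e. y) y e = y - 1"
  by (induction y) auto

lemma computable_pred1: "computable 1 (\<lambda>e. e 0 - 1)"
proof -
  have "computable (Suc 0) (\<lambda>e. prim_rec (\<lambda>e. 0) (\<lambda>y r e. y) (e 0) (\<lambda>i. e (Suc i)))"
    by (intro computable_prim_rec computable_const computable_proj) simp
  then show ?thesis by (simp add: prim_rec_pred)
qed

lemma prim_rec_sub: "prim_rec (\<lambda>e. e 0) (\<lambda>y r e. r - 1) y e = e 0 - y"
  by (induction y) auto

lemma computable_sub2: "computable 2 (\<lambda>e. e 1 - e 0)"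
proof -
  have "computable 3 (\<lambda>e. e 1 - 1)" by (rule computable_app1[OF computable_pred1 computable_proj]) simp
  then have "computable (Suc 1) (\<lambda>e. prim_rec (\<lambda>e. e 0) (\<lambda>y r e. r - 1) (e 0) (\<lambda>i. e (Suc i)))"
    by (intro computable_prim_rec computable_proj) (simp_all add: numeral_3_eq_3 numeral_2_eq_2 One_nat_def)
  then show ?thesis by (simp only: prim_rec_sub) (simp add: numeral_2_eq_2 One_nat_def)
qed

lemma computable_sub: "computable n f \<Longrightarrow> computable n g \<Longrightarrow> computable n (\<lambda>e. f e - g e)"
proof -
  assume "computable n f" "computable n g"
  have "computable 2 (\<lambda>e. e 0 - e 1)"
    using computable_app2[OF computable_sub2 computable_proj[of 1 2] computable_proj[of 0 2]] by simp
  then show ?thesis using \<open>computable n f\<close> \<open>computable n g\<close> by (rule computable_app2)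
qed

lemma prim_rec_pow: "prim_rec (\<lambda>e. 1) (\<lambda>y r e. r * e 0) y e = e 0 ^ y"
  by (induction y) auto

lemma computable_pow: "computable n f \<Longrightarrow> computable n g \<Longrightarrow> computable n (\<lambda>e. f e ^ g e)"
proof -
  assume "computable n f" "computable n g"
  have "computable 3 (\<lambda>e. e 1 * e 2)" by (intro computable_mult computable_proj) auto
  then have "computable (Suc 1) (\<lambda>e. prim_rec (\<lambda>e. 1) (\<lambda>y r e. r * e 0) (e 0) (\<lambda>i. e (Suc i)))"
    by (intro computable_prim_rec computable_const) (simp_all add: numeral_3_eq_3 numeral_2_eq_2 One_nat_def)
  then have "computable 2 (\<lambda>e. e 1 ^ e 0)" by (simp only: prim_rec_pow) (simp add: numeral_2_eq_2 One_nat_def)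
  then have "computable 2 (\<lambda>e. e 0 ^ e 1)"
    using computable_app2[OF _ computable_proj[of 1 2] computable_proj[of 0 2]] by simp
  then show ?thesis using \<open>computable n f\<close> \<open>computable n g\<close> by (rule computable_app2)
qed

definition decidable :: "nat \<Rightarrow> ((nat \<Rightarrow> nat) \<Rightarrow> bool) \<Rightarrow> bool" where
  "decidable n P \<longleftrightarrow> computable n (\<lambda>e. if P e then 1 else 0)"

lemma decidable_eq: "computable n f \<Longrightarrow> computable n g \<Longrightarrow> decidable n (\<lambda>e. f e = g e)"
  unfolding decidable_def
  by (rule computable_cong[where f = "\<lambda>e. 1 - ((f e - g e) + (g e - f e))"])
    (auto intro!: computable_sub computable_add computable_const)

lemma decidable_less: "computable n f \<Longrightarrow> computable n g \<Longrightarrow> decidable n (\<lambda>e. f e < g e)"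
  unfolding decidable_def
  by (rule computable_cong[where f = "\<lambda>e. 1 - (1 - (g e - f e))"])
    (auto intro!: computable_sub computable_const)

lemma decidable_not: "decidable n P \<Longrightarrow> decidable n (\<lambda>e. \<not> P e)"
  unfolding decidable_def
  by (rule computable_cong[where f = "\<lambda>e. 1 - (if P e then 1 else 0)"]) (auto intro!: computable_sub computable_const)

lemma decidable_conj: "decidable n P \<Longrightarrow> decidable n Q \<Longrightarrow> decidable n (\<lambda>e. P e \<and> Q e)"
  unfolding decidable_def
  by (rule computable_cong[where f = "\<lambda>e. (if P e then 1 else 0) * (if Q e then 1 else 0)"]) (auto intro!: computable_mult)

lemma decidable_disj: "decidable n P \<Longrightarrow> decidable n Q \<Longrightarrow> decidable n (\<lambda>e. P e \<or> Q e)"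
proof -
  assume "decidable n P" "decidable n Q"
  then have "decidable n (\<lambda>e. \<not> (\<not> P e \<and> \<not> Q e))" by (intro decidable_not decidable_conj)
  then show ?thesis by simp
qed

lemma decidable_imp: "decidable n P \<Longrightarrow> decidable n Q \<Longrightarrow> decidable n (\<lambda>e. P e \<longrightarrow> Q e)"
proof -
  assume "decidable n P" "decidable n Q"
  then have "decidable n (\<lambda>e. \<not> P e \<or> Q e)" by (intro decidable_not decidable_disj)
  then show ?thesis by simp
qed

lemma decidable_iff: "decidable n P \<Longrightarrow> decidable n Q \<Longrightarrow> decidable n (\<lambda>e. P e \<longleftrightarrow> Q e)"
proof -
  assume "decidable n P" "decidable n Q"
  then have "decidable n (\<lambda>e. (if P e then 1 else 0::nat) = (if Q e then 1 else 0))"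
    unfolding decidable_def[of n P] decidable_def[of n Q] by (rule decidable_eq)
  then show ?thesis unfolding decidable_def by (rule computable_cong) auto
qed

lemma computable_if: "decidable n P \<Longrightarrow> computable n f \<Longrightarrow> computable n g \<Longrightarrow> computable n (\<lambda>e. if P e then f e else g e)"
  unfolding decidable_def
  by (rule computable_cong[where f = "\<lambda>e. (if P e then 1 else 0) * f e + (1 - (if P e then 1 else 0)) * g e"])
    (auto intro!: computable_add computable_mult computable_sub computable_const)

lemma decidable_if: "decidable n A \<Longrightarrow> decidable n B \<Longrightarrow> decidable n C \<Longrightarrow> decidable n (\<lambda>e. if A e then B e else C e)"
proof -
  assume "decidable n A" "decidable n B" "decidable n C"
  then have "decidable n (\<lambda>e. (A e \<and> B e) \<or> (\<not> A e \<and> C e))" by (intro decidable_disj decidable_conj decidable_not)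
  then show ?thesis unfolding decidable_def by (rule computable_cong) auto
qed

lemma decidable_app1: "decidable 1 (\<lambda>e. P (e 0)) \<Longrightarrow> computable n f \<Longrightarrow> decidable n (\<lambda>e. P (f e))"
  unfolding decidable_def by (rule computable_app1[where F = "\<lambda>x. if P x then 1 else 0"])

lemma decidable_app2: "decidable 2 (\<lambda>e. P (e 0) (e 1)) \<Longrightarrow> computable n f \<Longrightarrow> computable n g \<Longrightarrow> decidable n (\<lambda>e. P (f e) (g e))"
  unfolding decidable_def by (rule computable_app2[where F = "\<lambda>x y. if P x y then 1 else 0"])

lemma decidable_app3: "decidable 3 (\<lambda>e. P (e 0) (e 1) (e 2)) \<Longrightarrow> computable n f \<Longrightarrow> computable n g \<Longrightarrow> computable n h
   \<Longrightarrow> decidable n (\<lambda>e. P (f e) (g e) (h e))"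
  unfolding decidable_def by (rule computable_app3[where F = "\<lambda>x y z. if P x y z then 1 else 0"])

definition bounded_mu :: "nat \<Rightarrow> (nat \<Rightarrow> bool) \<Rightarrow> nat" where
  "bounded_mu b P = (if \<exists>z<b. P z then LEAST z. P z else b)"

lemma bounded_mu_less_iff: "bounded_mu b P < b \<longleftrightarrow> (\<exists>z<b. P z)"
  unfolding bounded_mu_def by (auto intro: Least_le le_less_trans)

lemma bounded_mu_0: "bounded_mu 0 P = 0" by (simp add: bounded_mu_def)

lemma bounded_mu_Suc: "bounded_mu (Suc y) P = (if bounded_mu y P < y then bounded_mu y P else if P y then y else Suc y)"
proof (cases "\<exists>z<y. P z")
  case True
  then show ?thesis using bounded_mu_less_iff[of y P] unfolding bounded_mu_def by (auto simp: less_Suc_eq)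
next
  case False
  then have "bounded_mu y P = y" unfolding bounded_mu_def by auto
  moreover have "P y \<Longrightarrow> (LEAST z. P z) = y"
    by (rule Least_equality) (use False in \<open>auto simp: not_less[symmetric]\<close>)
  ultimately show ?thesis using False unfolding bounded_mu_def by (auto simp: less_Suc_eq)
qed

lemma bounded_mu_eq_Least: "\<exists>z<b. P z \<Longrightarrow> bounded_mu b P = (LEAST z. P z)"
  by (simp add: bounded_mu_def)

lemma prim_rec_bounded_mu: "prim_rec (\<lambda>e. 0) (\<lambda>y r e. if r < y then r else if P y e then y else Suc y) y e = bounded_mu y (\<lambda>z. P z e)"
  by (induction y) (simp_all add: bounded_mu_0 bounded_mu_Suc)

text \<open>Inserting an unused argument in second position, as needed for the step
  function of a primitive recursion, which receives the accumulator there.\<close>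

lemma decidable_insert_arg:
  assumes "decidable (Suc n) (\<lambda>e. P (e 0) (\<lambda>i. e (Suc i)))"
  shows "decidable (Suc (Suc n)) (\<lambda>e. P (e 0) (\<lambda>i. e (Suc (Suc i))))"
proof -
  have "computable (Suc (Suc n)) (\<lambda>e. (\<lambda>e. if P (e 0) (\<lambda>i. e (Suc i)) then 1 else 0)
           (\<lambda>j. e (if j = 0 then 0 else Suc j)))"
    by (rule computable_compose[OF assms[unfolded decidable_def]]) (rule computable_proj, simp)
  then show ?thesis unfolding decidable_def by simp
qed

lemma computable_bounded_mu_arg:
  assumes "decidable (Suc n) (\<lambda>e. P (e 0) (\<lambda>i. e (Suc i)))"
  shows "computable (Suc n) (\<lambda>e. bounded_mu (e 0) (\<lambda>z. P z (\<lambda>i. e (Suc i))))"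
proof -
  have "computable (Suc (Suc n)) (\<lambda>e. if e 1 < e 0 then e 1 else if P (e 0) (\<lambda>i. e (Suc (Suc i))) then e 0 else Suc (e 0))"
    using decidable_insert_arg[OF assms] by (intro computable_if decidable_less computable_proj computable_SucI) auto
  then have "computable (Suc n) (\<lambda>e. prim_rec (\<lambda>e. 0) (\<lambda>y r e. if r < y then r else if P y e then y else Suc y) (e 0) (\<lambda>i. e (Suc i)))"
    by (intro computable_prim_rec computable_const) (simp add: One_nat_def)
  then show ?thesis by (simp only: prim_rec_bounded_mu)
qed

lemma computable_bounded_mu:
  assumes "decidable (Suc n) (\<lambda>e. P (e 0) (\<lambda>i. e (Suc i)))" and "computable n b"
  shows "computable n (\<lambda>e. bounded_mu (b e) (\<lambda>z. P z e))"
proof -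
  have "computable n (\<lambda>e. (\<lambda>e. bounded_mu (e 0) (\<lambda>z. P z (\<lambda>i. e (Suc i))))
           (\<lambda>j. (\<lambda>j. if j = 0 then b else (\<lambda>e. e (j - 1))) j e))"
    by (rule computable_compose[OF computable_bounded_mu_arg[OF assms(1)]]) (auto intro: computable_proj assms(2))
  then show ?thesis by simp
qed

lemma decidable_bex:
  assumes "decidable (Suc n) (\<lambda>e. P (e 0) (\<lambda>i. e (Suc i)))" and "computable n b"
  shows "decidable n (\<lambda>e. \<exists>z<b e. P z e)"
proof -
  have "decidable n (\<lambda>e. bounded_mu (b e) (\<lambda>z. P z e) < b e)"
    by (intro decidable_less computable_bounded_mu assms)
  then show ?thesis by (simp add: bounded_mu_less_iff)
qed

lemma decidable_ball:
  assumes "decidable (Suc n) (\<lambda>e. P (e 0) (\<lambda>i. e (Suc i)))" and "computable n b"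
  shows "decidable n (\<lambda>e. \<forall>z<b e. P z e)"
proof -
  have "decidable n (\<lambda>e. \<not> (\<exists>z<b e. \<not> P z e))"
    by (intro decidable_not decidable_bex assms)
  then show ?thesis by simp
qed

lemma div_bounded_mu: "x div y = (if y = 0 then 0 else bounded_mu (Suc x) (\<lambda>q. x < Suc q * y))"
proof (cases "y = 0")
  case False
  have "x div y < Suc x" by (simp add: le_imp_less_Suc)
  moreover have "x < Suc (x div y) * y" using False
    by (metis div_less_iff_less_mult lessI not_gr_zero)
  ultimately have "bounded_mu (Suc x) (\<lambda>q. x < Suc q * y) = (LEAST q. x < Suc q * y)"
    by (intro bounded_mu_eq_Least) blast
  also have "\<dots> = x div y"
  proof (rule Least_equality)
    show "x < Suc (x div y) * y" by fact
    fix q assume "x < Suc q * y"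
    then have "x div y < Suc q" using False by (simp add: div_less_iff_less_mult)
    then show "x div y \<le> q" by simp
  qed
  finally show ?thesis using False by simp
qed simp

lemma computable_div: "computable n f \<Longrightarrow> computable n g \<Longrightarrow> computable n (\<lambda>e. f e div g e)"
proof -
  assume f: "computable n f" and g: "computable n g"
  have "computable 2 (\<lambda>e. if e 1 = 0 then 0 else bounded_mu (Suc (e 0)) (\<lambda>q. e 0 < Suc q * e 1))"
    by (intro computable_if decidable_eq computable_proj computable_const computable_bounded_mu decidable_less computable_SucI computable_mult) auto
  then have "computable 2 (\<lambda>e. e 0 div e 1)" by (simp only: div_bounded_mu[symmetric])
  then show ?thesis using f g by (rule computable_app2)
qed

lemma computable_mod: "computable n f \<Longrightarrow> computable n g \<Longrightarrow> computable n (\<lambda>e. f e mod g e)"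
proof -
  assume f: "computable n f" and g: "computable n g"
  have "computable n (\<lambda>e. f e - f e div g e * g e)"
    by (intro computable_sub computable_mult computable_div f g)
  then show ?thesis by (simp add: minus_div_mult_eq_mod)
qed

lemmas computable_intros = computable_const computable_proj computable_SucI computable_add
  computable_mult computable_sub computable_pow computable_div computable_mod computable_if
  decidable_eq decidable_less decidable_not decidable_conj decidable_disj
  decidable_imp decidable_iff decidable_if decidable_bex decidable_ball computable_bounded_mu

text \<open>A set whose membership predicate is decidable is c.e.: it is the domain of
  the unbounded search for a zero of the characteristic function of its
  complement.\<close>

lemma ce_of_decidable:
  assumes "decidable 1 (\<lambda>e. P (e 0))"
  shows "ce {x. P x}"
proof -
  have "decidable 1 (\<lambda>e. \<not> P (e 0))" by (rule decidable_not[OF assms])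
  then obtain r where r: "\<forall>e. eval r (map e [0..<1]) (if \<not> P (e 0) then 1 else 0)"
    unfolding decidable_def computable_def by blast
  have r1: "eval r [x] (if \<not> P x then 1 else 0)" for x using r[rule_format, of "\<lambda>_. x"] by simp
  let ?F = "Mn (Cn r [Proj 1])"
  have "x \<in> {x. P x} \<longleftrightarrow> (\<exists>y. eval ?F [x] y)" for x
  proof
    assume "x \<in> {x. P x}"
    then have "eval r [x] 0" using r1[of x] by simp
    moreover have "eval (Proj 1) [0, x] x" using eval_Proj[of 1 "[0, x]"] by simp
    ultimately have "eval (Cn r [Proj 1]) [0, x] 0"
      by (intro eval_Cn[where ys = "[x]"]) auto
    then have "eval ?F [x] 0" by (intro eval_Mn) auto
    then show "\<exists>y. eval ?F [x] y" by blast
  next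
    assume "\<exists>y. eval ?F [x] y"
    then obtain y where "eval ?F [x] y" by blast
    then have "eval (Cn r [Proj 1]) [y, x] 0" by (cases rule: eval.cases) auto
    then obtain ys where ys: "length ys = 1" "eval (Proj 1) [y, x] (ys ! 0)" "eval r ys 0"
      by (cases rule: eval.cases) auto
    have "eval (Proj 1) [y, x] x" using eval_Proj[of 1 "[y, x]"] by simp
    then have "ys ! 0 = x" using eval_deterministic[OF ys(2)] by simp
    then have "ys = [x]" using ys(1) by (cases ys) auto
    then have "(if \<not> P x then 1 else 0) = (0::nat)" using eval_deterministic[OF r1[of x]] ys(3) by simp
    then show "x \<in> {x. P x}" by (simp split: if_splits)
  qed
  then show ?thesis unfolding ce_def by blast
qed

lemma prim_rec_triangle: "prim_rec (\<lambda>e. 0) (\<lambda>y r e. r + Suc y) y e = triangle y"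
  by (induction y) auto

lemma computable_prod_encode:
  assumes "computable n f" "computable n g"
  shows "computable n (\<lambda>e. prod_encode (f e, g e))"
proof -
  have "computable (Suc 0) (\<lambda>e. prim_rec (\<lambda>e. 0) (\<lambda>y r e. r + Suc y) (e 0) (\<lambda>i. e (Suc i)))"
    by (intro computable_prim_rec computable_intros) auto
  from this[unfolded prim_rec_triangle] have "computable 1 (\<lambda>e. triangle (e 0))" by simp
  then have "computable n (\<lambda>e. triangle (f e + g e))"
    by (rule computable_app1) (intro computable_add assms)
  then have "computable n (\<lambda>e. triangle (f e + g e) + f e)"
    using assms(1) by (rule computable_add)
  then show ?thesis by (simp add: prod_encode_def)
qed

text \<open>Both components of a pair code are bounded by the code, so decoding is a
  bounded search through prod_encode.\<close>

lemma prod_decode_as_search: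
  "fst (prod_decode x) = bounded_mu (Suc x) (\<lambda>a. \<exists>b<Suc x. prod_encode (a, b) = x)"
  "snd (prod_decode x) = bounded_mu (Suc x) (\<lambda>b. \<exists>a<Suc x. prod_encode (a, b) = x)"
proof -
  obtain a b where ab: "prod_decode x = (a, b)" by fastforce
  then have x: "prod_encode (a, b) = x" by (metis prod_decode_inverse)
  have le: "a \<le> x" "b \<le> x" using x le_prod_encode_1 le_prod_encode_2 by metis+
  have "bounded_mu (Suc x) (\<lambda>a. \<exists>b<Suc x. prod_encode (a, b) = x)
      = (LEAST a'. \<exists>b<Suc x. prod_encode (a', b) = x)"
    using le x by (intro bounded_mu_eq_Least) auto
  also have "\<dots> = a"
    by (rule Least_equality) (use le x prod_encode_eq in auto)
  finally show "fst (prod_decode x) = bounded_mu (Suc x) (\<lambda>a. \<exists>b<Suc x. prod_encode (a, b) = x)"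
    using ab by simp
  have "bounded_mu (Suc x) (\<lambda>b. \<exists>a<Suc x. prod_encode (a, b) = x)
      = (LEAST b'. \<exists>a<Suc x. prod_encode (a, b') = x)"
    using le x by (intro bounded_mu_eq_Least) auto
  also have "\<dots> = b"
    by (rule Least_equality) (use le x prod_encode_eq in auto)
  finally show "snd (prod_decode x) = bounded_mu (Suc x) (\<lambda>b. \<exists>a<Suc x. prod_encode (a, b) = x)"
    using ab by simp
qed

lemma computable_prod_decode:
  assumes "computable n f"
  shows "computable n (\<lambda>e. fst (prod_decode (f e)))" "computable n (\<lambda>e. snd (prod_decode (f e)))"
proof -
  have "computable 1 (\<lambda>e. bounded_mu (Suc (e 0)) (\<lambda>a. \<exists>b<Suc (e 0). prod_encode (a, b) = e 0))"
    by (intro computable_intros computable_prod_encode) auto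
  then show "computable n (\<lambda>e. fst (prod_decode (f e)))"
    unfolding prod_decode_as_search by (rule computable_app1) (rule assms)
  have "computable 1 (\<lambda>e. bounded_mu (Suc (e 0)) (\<lambda>b. \<exists>a<Suc (e 0). prod_encode (a, b) = e 0))"
    by (intro computable_intros computable_prod_encode) auto
  then show "computable n (\<lambda>e. snd (prod_decode (f e)))"
    unfolding prod_decode_as_search by (rule computable_app1) (rule assms)
qed

definition lit_of :: "nat \<Rightarrow> literal" where
  "lit_of l = (let p = l div 2 div 2;
      at = (if l div 2 mod 2 = 0 then AEq (fst (prod_decode p)) (snd (prod_decode p))
            else AE (fst (prod_decode p)) (snd (prod_decode p)))
    in if l mod 2 = 0 then Pos at else Neg at)"

text \<open>A literal code has the form 4 * prod_encode (a, b) plus two low bits, the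
  upper one selecting the atom and the lower one its sign.\<close>

lemma div_mod_2_lit_code:
  "Suc (4 * k) mod 2 = Suc 0" "Suc (4 * k) div 2 = 2 * k" "(4 * k) div 2 = 2 * k"
  "(4 * k) mod 2 = (0::nat)" "Suc (2 * k) div 2 = k" "Suc (2 * k) mod 2 = Suc 0"
  "Suc (Suc (4 * k)) mod 2 = 0" "Suc (Suc (4 * k)) div 2 = Suc (2 * k)"
  "Suc (Suc (Suc (4 * k))) mod 2 = Suc 0" "Suc (Suc (Suc (4 * k))) div 2 = Suc (2 * k)"
  "(2 * k) div 2 = (k::nat)" "(2 * k) mod 2 = (0::nat)"
  by presburger+

lemma lit_of_code: "lit_of (lit_code \<phi>) = \<phi>"
proof (cases \<phi>)
  case (Pos a) then show ?thesis by (cases a) (simp_all add: lit_of_def Let_def div_mod_2_lit_code)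
next
  case (Neg a) then show ?thesis by (cases a) (simp_all add: lit_of_def Let_def div_mod_2_lit_code)
qed

lemma code_lit_of: "lit_code (lit_of l) = l"
proof -
  define q where "q = l div 2 div 2"
  define at where "at = (if l div 2 mod 2 = 0 then AEq (fst (prod_decode q)) (snd (prod_decode q))
                        else AE (fst (prod_decode q)) (snd (prod_decode q)))"
  have "atom_code at = 2 * q + l div 2 mod 2"
    unfolding at_def by (cases "l div 2 mod 2 = 0") simp_all
  also have "\<dots> = l div 2" unfolding q_def by (rule mult_div_mod_eq)
  finally have at: "atom_code at = l div 2" .
  have "lit_code (lit_of l) = 2 * atom_code at + l mod 2"
    unfolding lit_of_def Let_def q_def[symmetric] at_def[symmetric] by (cases "l mod 2 = 0") simp_all
  also have "\<dots> = l" unfolding at by (rule mult_div_mod_eq)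
  finally show ?thesis .
qed

lemma graph_iso_refl: "graph_iso G G"
  unfolding graph_iso_def by (rule exI[of _ id]) simp

lemma graph_iso_sym:
  assumes "graph_iso G H" shows "graph_iso H G"
proof -
  obtain f where f: "bij_betw f (fst G) (fst H)"
    and e: "\<forall>a\<in>fst G. \<forall>b\<in>fst G. (a, b) \<in> snd G \<longleftrightarrow> (f a, f b) \<in> snd H"
    using assms unfolding graph_iso_def by blast
  let ?g = "inv_into (fst G) f"
  have g: "bij_betw ?g (fst H) (fst G)" by (rule bij_betw_inv_into[OF f])
  have "\<forall>a\<in>fst H. \<forall>b\<in>fst H. (a, b) \<in> snd H \<longleftrightarrow> (?g a, ?g b) \<in> snd G"
  proof (intro ballI)
    fix a b assume ab: "a \<in> fst H" "b \<in> fst H"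
    have "f (?g a) = a" "f (?g b) = b" using ab f by (auto simp: bij_betw_inv_into_right)
    moreover have "?g a \<in> fst G" "?g b \<in> fst G" using ab g by (auto simp: bij_betw_def)
    ultimately show "(a, b) \<in> snd H \<longleftrightarrow> (?g a, ?g b) \<in> snd G" using e by metis
  qed
  then show ?thesis unfolding graph_iso_def using g by blast
qed

lemma graph_iso_trans:
  assumes "graph_iso G H" "graph_iso H K" shows "graph_iso G K"
proof -
  obtain f where f: "bij_betw f (fst G) (fst H)"
    and e: "\<forall>a\<in>fst G. \<forall>b\<in>fst G. (a, b) \<in> snd G \<longleftrightarrow> (f a, f b) \<in> snd H"
    using assms(1) unfolding graph_iso_def by blast
  obtain g where g: "bij_betw g (fst H) (fst K)"
    and e2: "\<forall>a\<in>fst H. \<forall>b\<in>fst H. (a, b) \<in> snd H \<longleftrightarrow> (g a, g b) \<in> snd K"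
    using assms(2) unfolding graph_iso_def by blast
  have "bij_betw (g \<circ> f) (fst G) (fst K)" using f g by (rule bij_betw_trans)
  moreover have "\<forall>a\<in>fst G. \<forall>b\<in>fst G. (a, b) \<in> snd G \<longleftrightarrow> ((g \<circ> f) a, (g \<circ> f) b) \<in> snd K"
  proof (intro ballI)
    fix a b assume ab: "a \<in> fst G" "b \<in> fst G"
    then have "f a \<in> fst H" "f b \<in> fst H" using f by (auto simp: bij_betw_def)
    then show "(a, b) \<in> snd G \<longleftrightarrow> ((g \<circ> f) a, (g \<circ> f) b) \<in> snd K"
      using e e2 ab by simp
  qed
  ultimately show ?thesis unfolding graph_iso_def by blast
qed

lemma graph_iso_card: "graph_iso G H \<Longrightarrow> card (fst G) = card (fst H)"
  unfolding graph_iso_def using bij_betw_same_card by blast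

section \<open>Coding finite graphs by natural numbers\<close>

text \<open>The codes of graphs on {0..<k} form the block starting at code_base k, of
  length 2^(k*k); the offset inside the block is the bit mask of the adjacency
  matrix, stored row by row.  Only symmetric, irreflexive pairs count as edges,
  so every number codes a graph.\<close>

definition code_base :: "nat \<Rightarrow> nat" where "code_base k = (\<Sum>j<k. 2 ^ (j * j))"

definition code_size :: "nat \<Rightarrow> nat" where "code_size c = bounded_mu (Suc c) (\<lambda>k. c < code_base (Suc k))"

definition code_mask :: "nat \<Rightarrow> nat" where "code_mask c = c - code_base (code_size c)"

definition code_edge :: "nat \<Rightarrow> nat \<Rightarrow> nat \<Rightarrow> bool" where
  "code_edge c i j \<longleftrightarrow> i \<noteq> j \<and> i < code_size c \<and> j < code_size c \<and>
     i * code_size c + j \<in> set_decode (code_mask c) \<and> j * code_size c + i \<in> set_decode (code_mask c)"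

definition graph_of_code :: "nat \<Rightarrow> graph" where
  "graph_of_code c = ({0..<code_size c}, {(i, j). code_edge c i j})"

lemma code_base_Suc: "code_base (Suc k) = code_base k + 2 ^ (k * k)"
  by (simp add: code_base_def)

lemma strict_mono_code_base: "strict_mono code_base"
  unfolding strict_mono_Suc_iff by (simp add: code_base_Suc)

lemma code_base_le: "k \<le> k' \<Longrightarrow> code_base k \<le> code_base k'"
  using strict_mono_code_base by (simp add: strict_mono_less_eq)

lemma code_base_ge: "k \<le> code_base k"
  using strict_mono_code_base by (rule strict_mono_imp_increasing)

lemma code_size_props: "code_base (code_size c) \<le> c \<and> c < code_base (Suc (code_size c))"
proof -
  have ex: "\<exists>k<Suc c. c < code_base (Suc k)"
    using code_base_ge[of "Suc c"] by auto
  then have canon: "code_size c = (LEAST k. c < code_base (Suc k))"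
    unfolding code_size_def by (rule bounded_mu_eq_Least)
  have 1: "c < code_base (Suc (code_size c))" unfolding canon using ex by (metis LeastI)
  have 2: "code_base (code_size c) \<le> c"
  proof (cases "code_size c")
    case (Suc k)
    then have "\<not> c < code_base (Suc k)" using not_less_Least[of k "\<lambda>k. c < code_base (Suc k)"] canon by simp
    then show ?thesis using Suc by simp
  qed (simp add: code_base_def)
  show ?thesis using 1 2 by simp
qed

lemma code_size_unique: "code_base k \<le> c \<Longrightarrow> c < code_base (Suc k) \<Longrightarrow> code_size c = k"
proof -
  assume a: "code_base k \<le> c" "c < code_base (Suc k)"
  show ?thesis
  proof (rule linorder_cases[of "code_size c" k])
    assume "code_size c < k"
    then have "code_base (Suc (code_size c)) \<le> code_base k" by (intro code_base_le) simp
    then show ?thesis using a code_size_props[of c] by simp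
  next
    assume "k < code_size c"
    then have "code_base (Suc k) \<le> code_base (code_size c)" by (intro code_base_le) simp
    then show ?thesis using a code_size_props[of c] by simp
  qed
qed

lemma code_base_plus_mask:
  assumes "m < 2 ^ (k * k)"
  shows "code_size (code_base k + m) = k" "code_mask (code_base k + m) = m"
proof -
  show 1: "code_size (code_base k + m) = k" by (rule code_size_unique) (use assms in \<open>simp_all add: code_base_Suc\<close>)
  show "code_mask (code_base k + m) = m" unfolding code_mask_def 1 by simp
qed

lemma fug_graph_of_code: "0 < code_size c \<Longrightarrow> fug (graph_of_code c)"
  unfolding fug_def graph_of_code_def irrefl_def sym_def by (auto simp: code_edge_def)

lemma row_major_index_inj:
  assumes "i < k" "j < k" "i' < k" "j' < k" "i * k + j = i' * k + (j'::nat)"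
  shows "i = i' \<and> j = j'"
proof -
  have "(i * k + j) div k = i" "(i * k + j) mod k = j" using assms(1-4) by auto
  moreover have "(i' * k + j') div k = i'" "(i' * k + j') mod k = j'" using assms(1-4) by auto
  ultimately show ?thesis using assms(5) by metis
qed

lemma row_major_index_less: "i < k \<Longrightarrow> j < k \<Longrightarrow> i * k + j < k * (k::nat)"
proof -
  assume "i < k" "j < k"
  then have "i * k + j < i * k + k" by simp
  also have "\<dots> = Suc i * k" by simp
  also have "\<dots> \<le> k * k" using \<open>i < k\<close> by (intro mult_le_mono1) simp
  finally show ?thesis .
qed

lemma set_encode_less: "finite SS \<Longrightarrow> SS \<subseteq> {..<t} \<Longrightarrow> set_encode SS < 2 ^ t"
proof (induction t arbitrary: SS)
  case 0 then show ?case by simp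
next
  case (Suc t)
  show ?case
  proof (cases "t \<in> SS")
    case True
    have "SS = insert t (SS - {t})" using True by auto
    then have "set_encode SS = 2 ^ t + set_encode (SS - {t})"
      using Suc.prems by (metis finite_Diff set_encode_insert Diff_iff singletonI)
    moreover have "set_encode (SS - {t}) < 2 ^ t"
      using Suc.prems by (intro Suc.IH) (auto simp: less_Suc_eq)
    ultimately show ?thesis by simp
  next
    case False
    then have "set_encode SS < 2 ^ t" using Suc.prems by (intro Suc.IH) (auto simp: less_Suc_eq)
    then show ?thesis by simp
  qed
qed

lemma encode_relation:
  "\<exists>m < 2 ^ (k * k). \<forall>i<k. \<forall>j<k. i * k + j \<in> set_decode m \<longleftrightarrow> R i j"
proof -
  define SS where "SS = {i * k + j | i j. i < k \<and> j < k \<and> R i j}"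
  have sub: "SS \<subseteq> {..<k * k}" by (auto simp: SS_def row_major_index_less)
  then have fin: "finite SS" by (rule finite_subset) simp
  have mem: "i * k + j \<in> SS \<longleftrightarrow> R i j" if ij: "i < k" "j < k" for i j
  proof
    assume "i * k + j \<in> SS"
    then obtain i' j' where "i' < k" "j' < k" "R i' j'" "i * k + j = i' * k + j'"
      unfolding SS_def by blast
    then show "R i j" using row_major_index_inj[OF ij] by metis
  next
    assume "R i j"
    then show "i * k + j \<in> SS" unfolding SS_def using ij by blast
  qed
  show ?thesis
  proof (intro exI conjI allI impI)
    show "set_encode SS < 2 ^ (k * k)" by (rule set_encode_less[OF fin sub])
    fix i j assume "i < k" "j < k"
    then show "i * k + j \<in> set_decode (set_encode SS) \<longleftrightarrow> R i j"
      using mem fin by (simp add: set_encode_inverse)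
  qed
qed

lemma fug_iso_graph_of_code:
  assumes "fug G"
  shows "\<exists>c. 0 < code_size c \<and> graph_iso G (graph_of_code c)"
proof -
  obtain V E where G: "G = (V, E)" by (cases G)
  have fin: "finite V" and ne: "V \<noteq> {}" and irr: "irrefl E" and sy: "sym E"
    using assms unfolding G fug_def by simp_all
  define k where "k = card V"
  have k0: "0 < k" using fin ne k_def by (simp add: card_gt_0_iff)
  obtain h where h: "bij_betw h {0..<k} V" using ex_bij_betw_nat_finite[OF fin] k_def by blast
  obtain m where m: "m < 2 ^ (k * k)"
    and bits: "\<forall>i<k. \<forall>j<k. i * k + j \<in> set_decode m \<longleftrightarrow> (h i, h j) \<in> E"
    using encode_relation[of k "\<lambda>i j. (h i, h j) \<in> E"] by blast
  define c where "c = code_base k + m"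
  have ck: "code_size c = k" and cm: "code_mask c = m" using code_base_plus_mask[OF m] c_def by auto
  have bit: "i * k + j \<in> set_decode (code_mask c) \<longleftrightarrow> (h i, h j) \<in> E" if "i < k" "j < k" for i j
    using bits that cm by blast
  have edge: "code_edge c a b \<longleftrightarrow> (h a, h b) \<in> E" if ab: "a < k" "b < k" for a b
  proof -
    have "code_edge c a b \<longleftrightarrow> a \<noteq> b \<and> (h a, h b) \<in> E \<and> (h b, h a) \<in> E"
      unfolding code_edge_def ck using ab bit by simp
    also have "\<dots> \<longleftrightarrow> (h a, h b) \<in> E"
      using irr sy by (auto simp: irrefl_def sym_def)
    finally show ?thesis .
  qed
  have "graph_iso (graph_of_code c) G"
    unfolding graph_iso_def
  proof (intro exI conjI)
    show "bij_betw h (fst (graph_of_code c)) (fst G)" using h G ck by (simp add: graph_of_code_def)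
    show "\<forall>a\<in>fst (graph_of_code c). \<forall>b\<in>fst (graph_of_code c). (a, b) \<in> snd (graph_of_code c) \<longleftrightarrow> (h a, h b) \<in> snd G"
      using edge G ck by (simp add: graph_of_code_def)
  qed
  then show ?thesis using ck k0 graph_iso_sym by blast
qed

lemma decidable_mem: "computable n f \<Longrightarrow> computable n g \<Longrightarrow> decidable n (\<lambda>e. f e \<in> set_decode (g e))"
proof -
  assume "computable n f" "computable n g"
  then have "decidable n (\<lambda>e. g e div 2 ^ f e mod 2 = 1)" by (intro computable_intros)
  then show ?thesis unfolding set_decode_def by (simp add: odd_iff_mod_2_eq_one)
qed

lemma prim_rec_code_base: "prim_rec (\<lambda>e. 0) (\<lambda>y r e. r + 2 ^ (y * y)) y e = code_base y"
  by (induction y) (simp_all add: code_base_Suc code_base_def)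

lemma computable_code_base: "computable n f \<Longrightarrow> computable n (\<lambda>e. code_base (f e))"
proof -
  have "computable (Suc 0) (\<lambda>e. prim_rec (\<lambda>e. 0) (\<lambda>y r e. r + 2 ^ (y * y)) (e 0) (\<lambda>i. e (Suc i)))"
    by (intro computable_prim_rec computable_intros) auto
  then have "computable 1 (\<lambda>e. code_base (e 0))" by (simp add: prim_rec_code_base)
  then show "computable n f \<Longrightarrow> computable n (\<lambda>e. code_base (f e))" by (rule computable_app1)
qed

lemma computable_code_size: "computable n f \<Longrightarrow> computable n (\<lambda>e. code_size (f e))"
proof -
  have "computable 1 (\<lambda>e. bounded_mu (Suc (e 0)) (\<lambda>k. e 0 < code_base (Suc k)))"
    by (intro computable_intros computable_code_base) auto
  then have "computable 1 (\<lambda>e. code_size (e 0))" by (simp add: code_size_def)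
  then show "computable n f \<Longrightarrow> computable n (\<lambda>e. code_size (f e))" by (rule computable_app1)
qed

lemma computable_code_mask: "computable n f \<Longrightarrow> computable n (\<lambda>e. code_mask (f e))"
  unfolding code_mask_def by (intro computable_intros computable_code_base computable_code_size)

lemma decidable_code_edge: "computable n f \<Longrightarrow> computable n g \<Longrightarrow> computable n h \<Longrightarrow> decidable n (\<lambda>e. code_edge (f e) (g e) (h e))"
proof -
  have "decidable 3 (\<lambda>e. code_edge (e 0) (e 1) (e 2))"
    unfolding code_edge_def by (intro computable_intros decidable_mem computable_code_size computable_code_mask) auto
  then show "computable n f \<Longrightarrow> computable n g \<Longrightarrow> computable n h \<Longrightarrow> decidable n (\<lambda>e. code_edge (f e) (g e) (h e))"
    by (rule decidable_app3)
qed

section \<open>Deciding isomorphism of coded graphs\<close>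

text \<open>A candidate isomorphism between two graphs of size k is a k by k bit
  matrix p; iso_witness says that p is the graph of an edge-preserving
  permutation of {0..<k}.  Since p ranges over a finite set, isomorphism of codes
  is decidable.\<close>

definition perm_bit :: "nat \<Rightarrow> nat \<Rightarrow> nat \<Rightarrow> nat \<Rightarrow> bool" where
  "perm_bit k p i j \<longleftrightarrow> i * k + j \<in> set_decode p"

definition iso_witness :: "nat \<Rightarrow> nat \<Rightarrow> nat \<Rightarrow> nat \<Rightarrow> bool" where
  "iso_witness k p c c' \<longleftrightarrow>
    (\<forall>i<k. \<exists>j<k. perm_bit k p i j) \<and> (\<forall>j<k. \<exists>i<k. perm_bit k p i j) \<and>
    (\<forall>i<k. \<forall>j<k. \<forall>j'<k. perm_bit k p i j \<and> perm_bit k p i j' \<longrightarrow> j = j') \<and>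
    (\<forall>i<k. \<forall>i'<k. \<forall>j<k. perm_bit k p i j \<and> perm_bit k p i' j \<longrightarrow> i = i') \<and>
    (\<forall>i<k. \<forall>j<k. \<forall>i'<k. \<forall>j'<k. perm_bit k p i i' \<and> perm_bit k p j j' \<longrightarrow> (code_edge c i j \<longleftrightarrow> code_edge c' i' j'))"

definition iso_code :: "nat \<Rightarrow> nat \<Rightarrow> bool" where
  "iso_code c c' \<longleftrightarrow> code_size c = code_size c' \<and> (\<exists>p < 2 ^ (code_size c * code_size c). iso_witness (code_size c) p c c')"

lemma iso_code_imp_graph_iso:
  assumes "iso_code c c'"
  shows "graph_iso (graph_of_code c) (graph_of_code c')"
proof -
  define k where "k = code_size c"
  obtain p where ks: "code_size c' = k" and W: "iso_witness k p c c'"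
    using assms unfolding iso_code_def k_def by auto
  have total: "\<forall>i<k. \<exists>j<k. perm_bit k p i j"
    and onto: "\<forall>j<k. \<exists>i<k. perm_bit k p i j"
    and functional: "\<forall>i<k. \<forall>j<k. \<forall>j'<k. perm_bit k p i j \<and> perm_bit k p i j' \<longrightarrow> j = j'"
    and injective: "\<forall>i<k. \<forall>i'<k. \<forall>j<k. perm_bit k p i j \<and> perm_bit k p i' j \<longrightarrow> i = i'"
    and edges: "\<forall>i<k. \<forall>j<k. \<forall>i'<k. \<forall>j'<k. perm_bit k p i i' \<and> perm_bit k p j j'
                  \<longrightarrow> (code_edge c i j \<longleftrightarrow> code_edge c' i' j')"
    using W unfolding iso_witness_def by simp_all
  obtain f where f: "\<forall>i<k. f i < k \<and> perm_bit k p i (f i)" using total by metis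
  have "bij_betw f {0..<k} {0..<k}"
  proof (rule bij_betw_imageI)
    show "inj_on f {0..<k}" using f injective by (intro inj_onI) (metis atLeastLessThan_iff)
    show "f ` {0..<k} = {0..<k}"
    proof
      show "f ` {0..<k} \<subseteq> {0..<k}" using f by auto
      show "{0..<k} \<subseteq> f ` {0..<k}"
      proof
        fix j assume "j \<in> {0..<k}"
        then obtain i where "i < k" "perm_bit k p i j" using onto by auto
        then have "f i = j" using f functional \<open>j \<in> {0..<k}\<close> by auto
        then show "j \<in> f ` {0..<k}" using \<open>i < k\<close> by auto
      qed
    qed
  qed
  moreover have "\<forall>a\<in>{0..<k}. \<forall>b\<in>{0..<k}. code_edge c a b \<longleftrightarrow> code_edge c' (f a) (f b)"
    using edges f by auto
  ultimately show ?thesis unfolding graph_iso_def graph_of_code_def using k_def ks by auto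
qed

lemma graph_iso_imp_iso_code:
  assumes "graph_iso (graph_of_code c) (graph_of_code c')"
  shows "iso_code c c'"
proof -
  define k where "k = code_size c"
  have ks: "code_size c' = k" using graph_iso_card[OF assms] by (simp add: graph_of_code_def k_def)
  obtain f where f: "bij_betw f {0..<k} {0..<k}"
    and e: "\<forall>a\<in>{0..<k}. \<forall>b\<in>{0..<k}. code_edge c a b \<longleftrightarrow> code_edge c' (f a) (f b)"
    using assms ks unfolding graph_iso_def graph_of_code_def k_def by auto
  obtain p where p: "p < 2 ^ (k * k)"
    and bits: "\<forall>i<k. \<forall>j<k. i * k + j \<in> set_decode p \<longleftrightarrow> j = f i"
    using encode_relation[of k "\<lambda>i j. j = f i"] by blast
  have fk: "f i < k" if "i < k" for i using f that by (auto simp: bij_betw_def)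
  have graph_f: "perm_bit k p i j \<longleftrightarrow> j = f i" if "i < k" "j < k" for i j
    using bits that unfolding perm_bit_def by blast
  have onto_f: "\<exists>i<k. f i = j" if "j < k" for j
    using f that unfolding bij_betw_def by (metis atLeastLessThan_iff imageE zero_le)
  have inj_f: "f i = f i' \<Longrightarrow> i < k \<Longrightarrow> i' < k \<Longrightarrow> i = i'" for i i'
    using f unfolding bij_betw_def inj_on_def by auto
  have "\<forall>i<k. \<exists>j<k. perm_bit k p i j" using graph_f fk by blast
  moreover have "\<forall>j<k. \<exists>i<k. perm_bit k p i j" using graph_f onto_f by metis
  moreover have "\<forall>i<k. \<forall>j<k. \<forall>j'<k. perm_bit k p i j \<and> perm_bit k p i j' \<longrightarrow> j = j'"
    using graph_f by simp
  moreover have "\<forall>i<k. \<forall>i'<k. \<forall>j<k. perm_bit k p i j \<and> perm_bit k p i' j \<longrightarrow> i = i'"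
    using graph_f inj_f by metis
  moreover have "\<forall>i<k. \<forall>j<k. \<forall>i'<k. \<forall>j'<k. perm_bit k p i i' \<and> perm_bit k p j j'
                   \<longrightarrow> (code_edge c i j \<longleftrightarrow> code_edge c' i' j')"
    using graph_f e by simp
  ultimately have "iso_witness k p c c'" unfolding iso_witness_def by blast
  then show ?thesis unfolding iso_code_def using ks p k_def by auto
qed

lemma iso_code_iff: "iso_code c c' \<longleftrightarrow> graph_iso (graph_of_code c) (graph_of_code c')"
  using iso_code_imp_graph_iso graph_iso_imp_iso_code by blast

lemma decidable_iso_code: "computable n f \<Longrightarrow> computable n g \<Longrightarrow> decidable n (\<lambda>e. iso_code (f e) (g e))"
proof -
  have "decidable 2 (\<lambda>e. iso_code (e 0) (e 1))"
    unfolding iso_code_def iso_witness_def perm_bit_def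
    by (intro computable_intros decidable_mem computable_code_size decidable_code_edge) auto
  then show "computable n f \<Longrightarrow> computable n g \<Longrightarrow> decidable n (\<lambda>e. iso_code (f e) (g e))"
    by (rule decidable_app2)
qed

section \<open>Canonical codes and their increasing enumeration\<close>

text \<open>A code is canonical if it codes a non-empty graph and no smaller code is
  isomorphic to it; every isomorphism type of non-empty coded graphs thus has
  exactly one canonical code, its least code.\<close>

definition canonical :: "nat \<Rightarrow> bool" where
  "canonical c \<longleftrightarrow> 0 < code_size c \<and> (\<forall>c'<c. \<not> iso_code c' c)"

lemma iso_code_refl: "iso_code c c"
  by (simp add: iso_code_iff graph_iso_refl)

lemma iso_code_trans: "iso_code a b \<Longrightarrow> iso_code b c \<Longrightarrow> iso_code a c"
  by (simp add: iso_code_iff) (rule graph_iso_trans)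

lemma least_iso_canonical:
  assumes "0 < code_size c"
  shows "canonical (LEAST v. iso_code v c)" "iso_code (LEAST v. iso_code v c) c"
proof -
  let ?v = "LEAST v. iso_code v c"
  show iv: "iso_code ?v c" by (rule LeastI[of _ c]) (rule iso_code_refl)
  have "code_size ?v = code_size c" using iv by (simp add: iso_code_def)
  moreover have "\<not> iso_code c' ?v" if "c' < ?v" for c'
  proof
    assume "iso_code c' ?v"
    then have "iso_code c' c" using iv by (rule iso_code_trans)
    then show False using not_less_Least[OF that] by blast
  qed
  ultimately show "canonical ?v" using assms unfolding canonical_def by auto
qed

lemma code_size_code_base: "code_size (code_base k) = k"
  using code_base_plus_mask(1)[of 0 k] by simp

lemma code_size_less: "c < code_base k \<Longrightarrow> code_size c < k"
  using code_size_props[of c] code_base_le[of k "code_size c"] by (metis leD le_less_linear order_trans)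

lemma less_of_code_size_less: "code_size c < code_size c' \<Longrightarrow> c < c'"
  using code_size_props[of c] code_size_props[of c'] code_base_le[of "Suc (code_size c)" "code_size c'"]
  by linarith

text \<open>The first code of each block of positive size is canonical, since all
  smaller codes have fewer vertices.  This bounds the search for the next
  canonical code.\<close>

lemma canonical_code_base: "canonical (code_base (Suc k))"
  unfolding canonical_def
proof
  show "0 < code_size (code_base (Suc k))" by (simp add: code_size_code_base)
  show "\<forall>c'<code_base (Suc k). \<not> iso_code c' (code_base (Suc k))"
  proof (intro allI impI)
    fix c' assume "c' < code_base (Suc k)"
    then have "code_size c' < Suc k" by (rule code_size_less)
    then show "\<not> iso_code c' (code_base (Suc k))" unfolding iso_code_def by (simp add: code_size_code_base)
  qed
qed

definition next_canonical :: "nat \<Rightarrow> nat" where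
  "next_canonical c = bounded_mu (Suc (code_base (Suc (code_size c)))) (\<lambda>c'. c < c' \<and> canonical c')"

lemma next_canonical_props:
  "c < next_canonical c \<and> canonical (next_canonical c)"
  "c < v \<Longrightarrow> canonical v \<Longrightarrow> next_canonical c \<le> v"
proof -
  let ?w = "code_base (Suc (code_size c))"
  have w: "c < ?w" "canonical ?w" using code_size_props[of c] canonical_code_base by auto
  then have ex: "\<exists>z<Suc ?w. c < z \<and> canonical z" by auto
  have eq: "next_canonical c = (LEAST z. c < z \<and> canonical z)"
    unfolding next_canonical_def by (rule bounded_mu_eq_Least[OF ex])
  show "c < next_canonical c \<and> canonical (next_canonical c)" unfolding eq by (rule LeastI[of _ ?w]) (use w in simp)
  show "c < v \<Longrightarrow> canonical v \<Longrightarrow> next_canonical c \<le> v" unfolding eq by (rule Least_le) simp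
qed

fun canon :: "nat \<Rightarrow> nat" where
  "canon 0 = code_base 1"
| "canon (Suc n) = next_canonical (canon n)"

lemma canon_canonical: "canonical (canon n)"
  by (cases n) (simp_all add: next_canonical_props canonical_code_base[of 0, simplified])

lemma strict_mono_canon: "strict_mono canon"
  unfolding strict_mono_Suc_iff by (simp add: next_canonical_props)

lemma canon_0_le: "canonical v \<Longrightarrow> canon 0 \<le> v"
proof -
  assume "canonical v"
  then have "1 \<le> code_size v" by (simp add: canonical_def)
  then have "code_base 1 \<le> code_base (code_size v)" by (rule code_base_le)
  then show ?thesis using code_size_props[of v] by simp
qed

lemma canonical_below_canon: "canonical v \<Longrightarrow> v < canon N \<Longrightarrow> \<exists>n. canon n = v"
proof (induction N)
  case 0 then show ?case using canon_0_le by fastforce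
next
  case (Suc N)
  show ?case
  proof (cases "v < canon N")
    case True then show ?thesis using Suc by blast
  next
    case False
    show ?thesis
    proof (cases "canon N < v")
      case True
      then have "next_canonical (canon N) \<le> v" using next_canonical_props(2) Suc.prems(1) by blast
      then show ?thesis using Suc.prems(2) by simp
    next
      case False
      then show ?thesis using \<open>\<not> v < canon N\<close> by (intro exI[of _ N]) simp
    qed
  qed
qed

lemma canonical_imp_canon: "canonical v \<Longrightarrow> \<exists>n. canon n = v"
proof -
  assume "canonical v"
  have "v \<le> canon v" using strict_mono_canon by (rule strict_mono_imp_increasing)
  also have "canon v < canon (Suc v)" using strict_mono_canon by (simp add: strict_mono_Suc_iff)
  finally show ?thesis using canonical_below_canon[OF \<open>canonical v\<close>] by blast
qed

lemma decidable_canonical: "computable n f \<Longrightarrow> decidable n (\<lambda>e. canonical (f e))"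
proof -
  have "decidable 1 (\<lambda>e. canonical (e 0))"
    unfolding canonical_def by (intro computable_intros computable_code_size decidable_iso_code) auto
  then show "computable n f \<Longrightarrow> decidable n (\<lambda>e. canonical (f e))" by (rule decidable_app1)
qed

lemma computable_next_canonical: "computable 1 (\<lambda>e. next_canonical (e 0))"
  unfolding next_canonical_def by (intro computable_intros computable_code_base computable_code_size decidable_canonical) auto

lemma prim_rec_canon: "prim_rec (\<lambda>e. code_base 1) (\<lambda>y r e. next_canonical r) y e = canon y"
  by (induction y) auto

lemma computable_canon: "computable n f \<Longrightarrow> computable n (\<lambda>e. canon (f e))"
proof -
  have h: "computable (Suc 0) (\<lambda>e. prim_rec (\<lambda>e. code_base 1) (\<lambda>y r e. next_canonical r) (e 0) (\<lambda>i. e (Suc i)))"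
    by (intro computable_prim_rec computable_intros computable_app1[OF computable_next_canonical]) auto
  from h[unfolded prim_rec_canon] have "computable 1 (\<lambda>e. canon (e 0))" by simp
  then show "computable n f \<Longrightarrow> computable n (\<lambda>e. canon (f e))" by (rule computable_app1)
qed

definition enum_graph :: "nat \<Rightarrow> graph" where "enum_graph n = graph_of_code (canon n)"

lemma fug_enum_graph: "fug (enum_graph n)"
  unfolding enum_graph_def by (rule fug_graph_of_code) (use canon_canonical in \<open>simp add: canonical_def\<close>)

lemma card_enum_graph: "card (fst (enum_graph n)) = code_size (canon n)"
  by (simp add: enum_graph_def graph_of_code_def)

text \<open>Every finite graph is isomorphic to the graph of the least code of its
  isomorphism type, which is canonical and hence enumerated.\<close>

lemma enum_graph_exists: "fug G \<Longrightarrow> \<exists>n. graph_iso G (enum_graph n)"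
proof -
  assume "fug G"
  then obtain c where c: "0 < code_size c" "graph_iso G (graph_of_code c)"
    using fug_iso_graph_of_code by blast
  let ?v = "LEAST v. iso_code v c"
  obtain n where n: "canon n = ?v" using canonical_imp_canon least_iso_canonical(1)[OF c(1)] by blast
  have "graph_iso (graph_of_code ?v) (graph_of_code c)"
    using least_iso_canonical(2)[OF c(1)] by (simp add: iso_code_iff)
  then have "graph_iso G (graph_of_code ?v)" by (rule graph_iso_trans[OF c(2) graph_iso_sym])
  then have "graph_iso G (enum_graph n)" unfolding enum_graph_def n .
  then show ?thesis ..
qed

text \<open>Two distinct canonical codes are not isomorphic, so each isomorphism type
  occurs only once.\<close>

lemma enum_graph_unique: "graph_iso G (enum_graph n) \<Longrightarrow> graph_iso G (enum_graph m) \<Longrightarrow> n = m"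
proof -
  assume n: "graph_iso G (enum_graph n)" and m: "graph_iso G (enum_graph m)"
  have "graph_iso (enum_graph n) (enum_graph m)" "graph_iso (enum_graph m) (enum_graph n)"
    using graph_iso_trans[OF graph_iso_sym[OF n] m] graph_iso_trans[OF graph_iso_sym[OF m] n] .
  then have "iso_code (canon n) (canon m)" "iso_code (canon m) (canon n)"
    unfolding enum_graph_def iso_code_iff .
  then have "\<not> canon n < canon m" "\<not> canon m < canon n"
    using canon_canonical[of n] canon_canonical[of m] by (auto simp: canonical_def)
  then have "canon n = canon m" by simp
  then show "n = m" using strict_mono_canon by (simp add: strict_mono_eq)
qed

text \<open>Graphs with more vertices get larger indices, because their canonical
  codes lie in a later block.\<close>

lemma enum_graph_order:
  assumes "graph_iso G (enum_graph m)" "graph_iso G' (enum_graph n)" "card (fst G) < card (fst G')"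
  shows "m < n"
proof -
  have "code_size (canon m) < code_size (canon n)"
    using assms graph_iso_card[OF assms(1)] graph_iso_card[OF assms(2)] by (simp add: card_enum_graph)
  then have "canon m < canon n" by (rule less_of_code_size_less)
  then show ?thesis using strict_mono_canon by (simp add: strict_mono_less)
qed

text \<open>A proper extension of a finite graph has strictly more vertices: with the
  same universe, the induced edge relation would be the whole one.\<close>

lemma proper_substructure_card_less:
  assumes "fug G'" "proper_substructure G G'"
  shows "card (fst G) < card (fst G')"
proof -
  have sub: "fst G \<subseteq> fst G'" and eq: "snd G = snd G' \<inter> (fst G \<times> fst G)" and ne: "G \<noteq> G'"
    using assms(2) by (auto simp: proper_substructure_def substructure_def)
  have "fst G \<noteq> fst G'"
  proof
    assume f: "fst G = fst G'"
    have "snd G' \<subseteq> fst G' \<times> fst G'" using assms(1) by (simp add: fug_def)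
    then have "snd G = snd G'" using eq f by auto
    then show False using f ne by (simp add: prod_eq_iff)
  qed
  then have "fst G \<subset> fst G'" using sub by auto
  then show ?thesis using assms(1) by (intro psubset_card_mono) (auto simp: fug_def)
qed

lemma diag_simps:
  "Pos (AEq u v) \<in> diag G \<longleftrightarrow> u \<in> fst G \<and> v \<in> fst G \<and> u = v"
  "Neg (AEq u v) \<in> diag G \<longleftrightarrow> u \<in> fst G \<and> v \<in> fst G \<and> u \<noteq> v"
  "Pos (AE u v) \<in> diag G \<longleftrightarrow> u \<in> fst G \<and> v \<in> fst G \<and> (u, v) \<in> snd G"
  "Neg (AE u v) \<in> diag G \<longleftrightarrow> u \<in> fst G \<and> v \<in> fst G \<and> (u, v) \<notin> snd G"
  by (auto simp: diag_def)

definition lit_holds :: "nat \<Rightarrow> nat \<Rightarrow> bool" where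
  "lit_holds c l \<longleftrightarrow> (let p = prod_decode (l div 2 div 2) in
     fst p < code_size c \<and> snd p < code_size c \<and>
     ((if l div 2 mod 2 = 0 then fst p = snd p else code_edge c (fst p) (snd p)) \<longleftrightarrow> l mod 2 = 0))"

lemma lit_holds_iff: "lit_of l \<in> diag (graph_of_code c) \<longleftrightarrow> lit_holds c l"
  unfolding lit_of_def lit_holds_def Let_def
  by (auto simp: diag_simps graph_of_code_def)

lemma decidable_lit_holds: "computable n f \<Longrightarrow> computable n g \<Longrightarrow> decidable n (\<lambda>e. lit_holds (f e) (g e))"
proof -
  have "decidable 2 (\<lambda>e. lit_holds (e 0) (e 1))"
    unfolding lit_holds_def Let_def
    by (intro computable_intros computable_prod_decode computable_code_size decidable_code_edge) auto
  then show "computable n f \<Longrightarrow> computable n g \<Longrightarrow> decidable n (\<lambda>e. lit_holds (f e) (g e))" by (rule decidable_app2)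
qed

definition enum_set :: "(nat \<times> literal) set" where
  "enum_set = {(n, \<phi>). \<phi> \<in> diag (enum_graph n)}"

lemma enum_set_codes: "pair_code ` enum_set = {x. lit_holds (canon (fst (prod_decode x))) (snd (prod_decode x))}"
proof (intro set_eqI iffI)
  fix x assume "x \<in> pair_code ` enum_set"
  then obtain n \<phi> where "\<phi> \<in> diag (enum_graph n)" "x = prod_encode (n, lit_code \<phi>)"
    unfolding enum_set_def pair_code_def by auto
  then show "x \<in> {x. lit_holds (canon (fst (prod_decode x))) (snd (prod_decode x))}"
    using lit_holds_iff[of "lit_code \<phi>" "canon n"] by (simp add: lit_of_code enum_graph_def)
next
  fix x assume "x \<in> {x. lit_holds (canon (fst (prod_decode x))) (snd (prod_decode x))}"
  then have m: "lit_of (snd (prod_decode x)) \<in> diag (enum_graph (fst (prod_decode x)))"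
    using lit_holds_iff by (simp add: enum_graph_def)
  have "x = pair_code (fst (prod_decode x), lit_of (snd (prod_decode x)))"
    unfolding pair_code_def by (simp add: code_lit_of)
  then show "x \<in> pair_code ` enum_set" using m unfolding enum_set_def by blast
qed

lemma ce_enum_set: "ce (pair_code ` enum_set)"
proof -
  have "decidable 1 (\<lambda>e. lit_holds (canon (fst (prod_decode (e 0)))) (snd (prod_decode (e 0))))"
    by (intro decidable_lit_holds computable_canon computable_prod_decode computable_proj) auto
  then show ?thesis unfolding enum_set_codes by (rule ce_of_decidable)
qed

lemma friedberg_enum_graph: "friedberg_FUG enum_set enum_graph"
  unfolding friedberg_FUG_def computable_enumeration_FUG_def
proof (intro conjI allI impI)
  show "ce (pair_code ` enum_set)" by (rule ce_enum_set)
  fix n show "fug (enum_graph n)" by (rule fug_enum_graph)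
  show "{\<phi>. (n, \<phi>) \<in> enum_set} = diag (enum_graph n)" by (simp add: enum_set_def)
next
  fix G assume "fug G" then show "\<exists>n. graph_iso G (enum_graph n)" by (rule enum_graph_exists)
next
  fix G assume "fug G" then show "\<exists>!n. graph_iso G (enum_graph n)"
    using enum_graph_exists enum_graph_unique by blast
qed

theorem lemma2p4:
  shows "\<exists>Enum Gs. friedberg_FUG Enum Gs \<and>
     (\<forall>G G' m n. fug G \<and> fug G' \<and> proper_substructure G G' \<and>
        graph_iso G (Gs m) \<and> graph_iso G' (Gs n) \<longrightarrow> m < n)"
proof (intro exI conjI allI impI)
  show "friedberg_FUG enum_set enum_graph" by (rule friedberg_enum_graph)
  fix G G' m n
  assume "fug G \<and> fug G' \<and> proper_substructure G G' \<and>
    graph_iso G (enum_graph m) \<and> graph_iso G' (enum_graph n)"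
  then show "m < n" using enum_graph_order proper_substructure_card_less by blast
qed

end
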